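(* Let $q \geq 2$ be an integer. If $w_1 \cdots w_\ell$ is a $q$-Kunz word and $v_i := \min\{q-1, w_i\}$ for each $i$, then $v_1 \cdots v_\ell$ is a $(q-1)$-Kunz word.
   Context: A Kunz word of length $\ell$ is a word $w_1 \cdots w_\ell$ of positive integers satisfying the Kunz conditions: $w_i + w_j \geq w_{i+j}$ for all $i,j \geq 1$ with $i + j \leq \ell$, and $w_i + w_j + 1 \geq w_{i+j-\ell-1}$ for all $i,j \leq \ell$ with $i + j > \ell + 1$. A Kunz word is $q$-Kunz if its maximum entry is at most $q$. *)

theory Defs
  imports Main
begin

definition wd :: "nat list \<Rightarrow> nat \<Rightarrow> nat" where
  "wd w i = w ! (i - 1)"

definition kunz_word :: "nat list \<Rightarrow> bool" where
  "kunz_word w \<longleftrightarrow>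
     (\<forall>i \<in> set w. i \<ge> 1) \<and>
     (\<forall>i j. 1 \<le> i \<and> 1 \<le> j \<and> i + j \<le> length w \<longrightarrow>
            wd w i + wd w j \<ge> wd w (i + j)) \<and>
     (\<forall>i j. 1 \<le> i \<and> 1 \<le> j \<and> i \<le> length w \<and> j \<le> length w \<and> i + j > length w + 1 \<longrightarrow>
            wd w i + wd w j + 1 \<ge> wd w (i + j - length w - 1))"

definition q_kunz_word :: "nat \<Rightarrow> nat list \<Rightarrow> bool" where
  "q_kunz_word q w \<longleftrightarrow> kunz_word w \<and> (\<forall>x \<in> set w. x \<le> q)"

end

theory Submission
  imports Defs
begin

text \<open>Both Kunz conditions bound an entry by a sum of entries (plus possibly 1), so they survive
  applying to every entry a monotone, subadditive map f with f 1 = 1; truncation at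
  c \<ge> 1 is such a map.\<close>

lemma wd_map: "0 < i \<Longrightarrow> i \<le> length w \<Longrightarrow> wd (map f w) i = f (wd w i)"
  unfolding wd_def by simp

lemma kunz_word_map:
  assumes kunz: "kunz_word w"
    and mono: "mono f"
    and subadd: "\<And>a b. f (a + b) \<le> f a + f b"
    and f_one: "f 1 = 1"
  shows "kunz_word (map f w)"
proof -
  let ?v = "map f w" and ?n = "length w"
  have entry_pos: "\<forall>x\<in>set w. 1 \<le> x"
    and add: "\<And>i j. 1 \<le> i \<Longrightarrow> 1 \<le> j \<Longrightarrow> i + j \<le> ?n \<Longrightarrow> wd w (i + j) \<le> wd w i + wd w j"
    and wrap: "\<And>i j. 1 \<le> i \<Longrightarrow> 1 \<le> j \<Longrightarrow> i \<le> ?n \<Longrightarrow> j \<le> ?n \<Longrightarrow> ?n + 1 < i + j \<Longrightarrow>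
                 wd w (i + j - ?n - 1) \<le> wd w i + wd w j + 1"
    using kunz unfolding kunz_word_def by auto
  have "\<forall>x\<in>set ?v. 1 \<le> x"
  proof
    fix y assume "y \<in> set ?v"
    then obtain x where "x \<in> set w" "y = f x" by auto
    with entry_pos mono f_one show "1 \<le> y" by (metis monoD)
  qed
  moreover have "wd ?v (i + j) \<le> wd ?v i + wd ?v j"
    if "1 \<le> i" "1 \<le> j" "i + j \<le> ?n" for i j
  proof -
    have "f (wd w (i + j)) \<le> f (wd w i + wd w j)" using mono add[OF that] by (rule monoD)
    also have "\<dots> \<le> f (wd w i) + f (wd w j)" by (rule subadd)
    finally show ?thesis using that by (simp add: wd_map)
  qed
  moreover have "wd ?v (i + j - ?n - 1) \<le> wd ?v i + wd ?v j + 1"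
    if "1 \<le> i" "1 \<le> j" "i \<le> ?n" "j \<le> ?n" "?n + 1 < i + j" for i j
  proof -
    have "f (wd w (i + j - ?n - 1)) \<le> f (wd w i + wd w j + 1)" using mono wrap[OF that] by (rule monoD)
    also have "\<dots> \<le> f (wd w i) + f (wd w j) + 1" using subadd[of "wd w i + wd w j" 1] subadd f_one
      by (metis add_le_mono order.trans order_refl)
    finally show ?thesis using that by (simp add: wd_map)
  qed
  ultimately show ?thesis unfolding kunz_word_def by simp
qed

lemma kunz_word_map_min:
  assumes "kunz_word w" and "1 \<le> c"
  shows "kunz_word (map (min c) w)"
  using assms(1) by (rule kunz_word_map) (use assms(2) in \<open>auto simp: mono_def\<close>)

theorem lemma3p8:
  fixes q :: nat and w :: "nat list"
  assumes "q \<ge> 2" and "q_kunz_word q w"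
  shows "q_kunz_word (q - 1) (map (\<lambda>x. min (q - 1) x) w)"
proof -
  have "kunz_word w" using assms(2) unfolding q_kunz_word_def by simp
  then have "kunz_word (map (min (q - 1)) w)"
    by (rule kunz_word_map_min) (use assms(1) in simp)
  then show ?thesis unfolding q_kunz_word_def by auto
qed

end
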